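(* Let $\mathcal G$ be a cluster graph on $l$ vertices consisting of $m$ clusters, and let $L_{\mathrm{nrm}}=C^{-1/2}(D-A)C^{-1/2}$ be its normalized Laplacian, where $A$ is the adjacency matrix, $D$ the degree matrix and $C=D+I$. Let $N\in\mathbb R^{l\times l}$ be a symmetric matrix, let $\tilde L_{\mathrm{nrm}}=L_{\mathrm{nrm}}+N$, and let $\tilde m$ be the number of eigenvalues of $\tilde L_{\mathrm{nrm}}$ (counted with multiplicity) that are less than $0.5$. If $\|N\|<0.5$, where $\|\cdot\|$ is the induced 2-norm, then $\tilde m=m$.
   Context: A cluster graph is a disjoint union of complete graphs (its clusters). Graphs are undirected without self-loops. *)

theory Defs
  imports "HOL-Analysis.Analysis" "HOL-Computational_Algebra.Polynomial"
begin

text \<open>Graphs on the finite vertex type 'n (so l = CARD('n)), given by an edge relation E.\<close>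

definition cluster_graph :: "('n::finite \<Rightarrow> 'n \<Rightarrow> bool) \<Rightarrow> nat \<Rightarrow> bool" where
  "cluster_graph E m \<longleftrightarrow>
     (\<exists>R. equiv UNIV R \<and> (\<forall>x y. E x y \<longleftrightarrow> x \<noteq> y \<and> (x, y) \<in> R) \<and> card (UNIV // R) = m)"

definition adj_mat :: "('n::finite \<Rightarrow> 'n \<Rightarrow> bool) \<Rightarrow> real^'n^'n" where
  "adj_mat E = (\<chi> i j. if E i j then 1 else 0)"

definition degree :: "('n::finite \<Rightarrow> 'n \<Rightarrow> bool) \<Rightarrow> 'n \<Rightarrow> nat" where
  "degree E i = card {j. E i j}"

definition deg_mat :: "('n::finite \<Rightarrow> 'n \<Rightarrow> bool) \<Rightarrow> real^'n^'n" where
  "deg_mat E = (\<chi> i j. if i = j then real (degree E i) else 0)"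

definition C_inv_sqrt :: "('n::finite \<Rightarrow> 'n \<Rightarrow> bool) \<Rightarrow> real^'n^'n" where
  "C_inv_sqrt E = (\<chi> i j. if i = j then 1 / sqrt (real (degree E i) + 1) else 0)"

definition norm_laplacian :: "('n::finite \<Rightarrow> 'n \<Rightarrow> bool) \<Rightarrow> real^'n^'n" where
  "norm_laplacian E = C_inv_sqrt E ** (deg_mat E - adj_mat E) ** C_inv_sqrt E"

definition charpoly :: "real^'n^'n \<Rightarrow> real poly" where
  "charpoly M = det (\<chi> i j. (if i = j then [:0, 1:] else 0) - [:M $ i $ j:])"

definition eig_count_below :: "real^'n::finite^'n \<Rightarrow> real \<Rightarrow> nat" where
  "eig_count_below M t = (\<Sum>a\<in>{a. poly (charpoly M) a = 0 \<and> a < t}. order a (charpoly M))"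

definition norm2 :: "real^'n::finite^'n \<Rightarrow> real" where
  "norm2 N = onorm (\<lambda>x. N *v x)"

end

theory Submission
  imports Defs
begin

(* With C = D + I, each diagonal entry of C is the size of the vertex's cluster, so
   L_nrm = I - P where P averages a vector over each cluster; P is the orthogonal projection onto
   the span K of the m cluster indicator vectors. Since |x . N x| <= ||N|| |x|^2 < |x|^2 / 2, the
   quadratic form of L_nrm + N is below |x|^2 / 2 on K and above it on the orthogonal complement
   of K (for x <> 0). In an orthonormal eigenbasis of the symmetric matrix L_nrm + N, the
   eigenvectors with eigenvalue < 1/2 span a space meeting the complement of K trivially, and
   those with eigenvalue >= 1/2 span one meeting K trivially; comparing dimensions, exactly m
   eigenvalues lie below 1/2. *)

section \<open>Spectral theorem for real symmetric matrices\<close>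

definition orthonormal :: "('i \<Rightarrow> 'a::real_inner) \<Rightarrow> bool" where
  "orthonormal b \<longleftrightarrow> (\<forall>i j. b i \<bullet> b j = (if i = j then 1 else 0))"

lemma symmetric_matrix_inner:
  fixes M :: "real^'n^'n"
  assumes "transpose M = M"
  shows "(M *v x) \<bullet> y = x \<bullet> (M *v y)"
  by (metis assms dot_lmul_matrix vector_transpose_matrix)

lemma linear_coeff_eq_0_if_quadratic_nonneg:
  fixes a c :: real
  assumes nonneg: "\<And>t. 0 \<le> t * a + t\<^sup>2 * c"
  shows "a = 0"
proof (rule ccontr)
  assume "a \<noteq> 0"
  define s where "s = 1 / (\<bar>c\<bar> + 1)"
  have "s > 0" "s * c < 1"
    unfolding s_def by (auto simp: divide_less_eq)
  have "0 \<le> (- s * a) * a + (- s * a)\<^sup>2 * c"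
    by (rule nonneg)
  also have "\<dots> = s * a\<^sup>2 * (s * c - 1)"
    by (simp add: power2_eq_square algebra_simps)
  also have "\<dots> < 0"
    using \<open>s > 0\<close> \<open>s * c < 1\<close> \<open>a \<noteq> 0\<close> by (simp add: mult_pos_neg)
  finally show False by simp
qed

lemma rayleigh_maximiser_is_eigenvector:
  fixes M :: "real^'n^'n"
  assumes sym: "transpose M = M" and S: "subspace S" and inv: "\<And>x. x \<in> S \<Longrightarrow> M *v x \<in> S"
    and "x \<in> S"
    and le: "\<And>z. z \<in> S \<Longrightarrow> z \<bullet> (M *v z) \<le> \<mu> * (z \<bullet> z)"
    and eq: "x \<bullet> (M *v x) = \<mu> * (x \<bullet> x)"
  shows "M *v x = \<mu> *\<^sub>R x"
proof -
  define y where "y = M *v x - \<mu> *\<^sub>R x"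
  have "y \<in> S"
    unfolding y_def using S inv \<open>x \<in> S\<close> by (simp add: subspace_diff subspace_scale)
  \<comment> \<open>expand the nonnegative quadratic \<open>t \<mapsto> \<mu> |x + t y|\<^sup>2 - (x + t y) \<bullet> M (x + t y)\<close>, which vanishes at 0\<close>
  have "0 \<le> t * (- 2 * (y \<bullet> y)) + t\<^sup>2 * (\<mu> * (y \<bullet> y) - y \<bullet> (M *v y))" for t
  proof -
    have "x + t *\<^sub>R y \<in> S"
      using S \<open>x \<in> S\<close> \<open>y \<in> S\<close> by (simp add: subspace_add subspace_scale)
    from le[OF this] show ?thesis
      using eq symmetric_matrix_inner[OF sym, of x y]
      by (simp add: y_def power2_eq_square algebra_simps inner_commute)
  qed
  then have "y \<bullet> y = 0"
    using linear_coeff_eq_0_if_quadratic_nonneg by fastforce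
  then show ?thesis
    by (simp add: y_def)
qed

lemma symmetric_matrix_has_eigenvector_in_invariant_subspace:
  fixes M :: "real^'n^'n"
  assumes sym: "transpose M = M" and S: "subspace S" and inv: "\<And>x. x \<in> S \<Longrightarrow> M *v x \<in> S"
    and "S \<noteq> {0}"
  obtains x \<mu> where "x \<in> S" "norm x = 1" "M *v x = \<mu> *\<^sub>R x"
proof -
  define q where "q x = x \<bullet> (M *v x)" for x :: "real^'n"
  let ?T = "S \<inter> sphere 0 1"
  have "compact ?T"
    using S by (metis closed_subspace compact_Int_closed compact_sphere Int_commute)
  obtain v where "v \<in> S" "v \<noteq> 0"
    using \<open>S \<noteq> {0}\<close> S subspace_0 by blast
  then have "v /\<^sub>R norm v \<in> ?T"
    using S by (simp add: subspace_scale)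
  then have "?T \<noteq> {}" by blast
  moreover have "continuous_on ?T q"
    unfolding q_def by (intro continuous_intros linear_continuous_on matrix_vector_mul_bounded_linear)
  ultimately obtain x where "x \<in> ?T" and max: "\<And>y. y \<in> ?T \<Longrightarrow> q y \<le> q x"
    using continuous_attains_sup[OF \<open>compact ?T\<close>] by blast
  have le: "q z \<le> q x * (z \<bullet> z)" if "z \<in> S" for z
  proof (cases "z = 0")
    case False
    then have "q (z /\<^sub>R norm z) \<le> q x"
      using S \<open>z \<in> S\<close> by (intro max) (simp add: subspace_scale)
    then have "q z \<le> q x * (norm z)\<^sup>2"
      using False by (simp add: q_def matrix_vector_mult_scaleR power2_eq_square field_simps)
    then show ?thesis
      by (simp add: power2_norm_eq_inner)
  qed (simp add: q_def)
  have "q x = q x * (x \<bullet> x)"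
    using \<open>x \<in> ?T\<close> by (simp add: norm_eq_1)
  then have "M *v x = q x *\<^sub>R x"
    using \<open>x \<in> ?T\<close> le unfolding q_def by (intro rayleigh_maximiser_is_eigenvector[OF sym S inv]) auto
  with \<open>x \<in> ?T\<close> that show ?thesis
    by auto
qed

lemma symmetric_matrix_eigenbasis_of_invariant_subspace:
  fixes M :: "real^'n^'n"
  assumes sym: "transpose M = M" and "subspace S" and "\<And>x. x \<in> S \<Longrightarrow> M *v x \<in> S"
  shows "\<exists>B \<mu>. B \<subseteq> S \<and> pairwise orthogonal B \<and> (\<forall>v\<in>B. norm v = 1 \<and> M *v v = \<mu> v *\<^sub>R v) \<and>
    S \<subseteq> span B"
  using assms(2,3)
proof (induction "dim S" arbitrary: S rule: less_induct)
  case less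
  note S = \<open>subspace S\<close> and inv = \<open>\<And>x. x \<in> S \<Longrightarrow> M *v x \<in> S\<close>
  show ?case
  proof (cases "S = {0}")
    case True
    then show ?thesis by (intro exI[of _ "{}"]) auto
  next
    case False
    obtain x c where x: "x \<in> S" "norm x = 1" "M *v x = c *\<^sub>R x"
      using symmetric_matrix_has_eigenvector_in_invariant_subspace[OF sym S inv False] .
    define S' where "S' = {y \<in> S. y \<bullet> x = 0}"
    have S'_subspace: "subspace S'"
      unfolding S'_def using S by (auto simp: subspace_def inner_add_left)
    have S'_invariant: "M *v y \<in> S'" if "y \<in> S'" for y
      using that inv x(3) symmetric_matrix_inner[OF sym, of y x] by (auto simp: S'_def inner_commute)
    have "dim S' < dim S"
    proof (rule dim_psubset)
      have "x \<notin> S'"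
        using x(2) by (auto simp: S'_def norm_eq_1)
      then have "S' \<subset> S"
        using x(1) unfolding S'_def by blast
      then show "span S' \<subset> span S"
        using S'_subspace S by (simp add: span_eq_iff[THEN iffD2])
    qed
    then obtain B \<mu> where B: "B \<subseteq> S'" "pairwise orthogonal B"
      "\<forall>v\<in>B. norm v = 1 \<and> M *v v = \<mu> v *\<^sub>R v" "S' \<subseteq> span B"
      using less.hyps[OF _ S'_subspace S'_invariant] by blast
    have "x \<notin> B"
      using B(1) x(2) by (auto simp: S'_def norm_eq_1)
    have "S \<subseteq> span (insert x B)"
    proof
      fix y assume "y \<in> S"
      then have "y - (y \<bullet> x) *\<^sub>R x \<in> S'"
        using x S by (simp add: S'_def subspace_diff subspace_scale inner_diff_left norm_eq_1)
      then have "y - (y \<bullet> x) *\<^sub>R x \<in> span (insert x B)"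
        using B(4) span_mono[of B "insert x B"] by blast
      then show "y \<in> span (insert x B)"
        by (metis diff_add_cancel insertI1 span_add span_base span_scale)
    qed
    moreover have "pairwise orthogonal (insert x B)"
      using B(1,2) by (auto simp: pairwise_insert S'_def orthogonal_def inner_commute)
    moreover have "insert x B \<subseteq> S"
      using B(1) x(1) by (auto simp: S'_def)
    moreover have "\<forall>v\<in>insert x B. norm v = 1 \<and> M *v v = (\<mu>(x := c)) v *\<^sub>R v"
      using B(3) x \<open>x \<notin> B\<close> by auto
    ultimately show ?thesis
      by (intro exI[of _ "insert x B"] exI[of _ "\<mu>(x := c)"]) simp
  qed
qed

theorem symmetric_matrix_orthonormal_eigenbasis:
  fixes M :: "real^'n^'n"
  assumes "transpose M = M"
  obtains b :: "'n \<Rightarrow> real^'n" and \<mu> where "orthonormal b" "\<And>i. M *v b i = \<mu> i *\<^sub>R b i"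
proof -
  obtain B \<mu> where B: "pairwise orthogonal B" "\<forall>v\<in>B. norm v = 1 \<and> M *v v = \<mu> v *\<^sub>R v"
    "span B = UNIV"
    using symmetric_matrix_eigenbasis_of_invariant_subspace[OF assms subspace_UNIV] by auto
  moreover have "0 \<notin> B"
    using B(2) by force
  ultimately have "independent B"
    by (simp add: pairwise_orthogonal_independent)
  then have "card B = dim (span B)"
    by (simp add: dim_eq_card_independent)
  also have "\<dots> = CARD('n)"
    using B(3) by simp
  finally have "card B = CARD('n)" .
  moreover have "finite B"
    using \<open>independent B\<close> independent_bound by blast
  ultimately obtain b where b: "bij_betw b (UNIV::'n set) B"
    using finite_same_card_bij[of "UNIV::'n set" B] by auto
  have "b i \<bullet> b j = (if i = j then 1 else 0)" for i j
  proof (cases "i = j")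
    case True
    then show ?thesis
      using B(2) bij_betwE[OF b] by (simp add: norm_eq_1)
  next
    case False
    then have "b i \<noteq> b j"
      using bij_betw_imp_inj_on[OF b] by (auto simp: inj_on_def)
    then show ?thesis
      using False B(1) bij_betwE[OF b] by (simp add: pairwise_def orthogonal_def)
  qed
  moreover have "M *v b i = \<mu> (b i) *\<^sub>R b i" for i
    using B(2) bij_betwE[OF b] by blast
  ultimately show ?thesis
    using that[of b "\<mu> \<circ> b"] by (simp add: orthonormal_def)
qed

section \<open>Characteristic polynomial of a diagonalisable matrix\<close>

lemma poly_det: "poly (det P) t = det (\<chi> i j. poly (P $ i $ j) t)"
  unfolding det_def by (simp add: poly_sum poly_prod)

lemma poly_charpoly: "poly (charpoly M) t = det (mat t - M)"
  unfolding charpoly_def poly_det by (rule arg_cong[where f = det]) (simp add: vec_eq_iff mat_def)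

lemma matrix_vector_mult_mat: "mat c *v x = c *\<^sub>R (x :: real^'n)"
  by (simp add: vec_eq_iff matrix_vector_mult_def mat_def if_distrib[of "\<lambda>a. a * _"] cong: if_cong)

lemma matrix_of_columns_conj_entry:
  fixes b :: "'n::finite \<Rightarrow> real^'n"
  shows "(transpose (\<chi> i j. b j $ i) ** A ** (\<chi> i j. b j $ i)) $ i $ j = b i \<bullet> (A *v b j)"
  by (simp add: matrix_matrix_mult_def matrix_vector_mult_def inner_vec_def transpose_def
      sum_distrib_left sum_distrib_right mult.assoc mult.left_commute) (rule sum.swap)

lemma charpoly_orthonormal_eigenbasis:
  fixes M :: "real^'n^'n" and b :: "'n \<Rightarrow> real^'n"
  assumes "orthonormal b" and eigen: "\<And>i. M *v b i = \<mu> i *\<^sub>R b i"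
  shows "charpoly M = (\<Prod>i\<in>UNIV. [:- \<mu> i, 1:])"
proof (rule poly_eq_poly_eq_iff[THEN iffD1, OF ext])
  fix t :: real
  define V where "V = (\<chi> i j. b j $ i)"
  have "orthogonal_matrix V"
    using assms(1)
    by (simp add: orthogonal_matrix_orthonormal_columns column_def V_def orthonormal_def norm_eq_1 orthogonal_def)
  then have "det (transpose V) * det V = 1"
    by (metis det_mul det_I orthogonal_matrix_def)
  then have "poly (charpoly M) t = det (transpose V ** (mat t - M) ** V)"
    by (simp add: poly_charpoly det_mul)
  also have "transpose V ** (mat t - M) ** V = (\<chi> i j. if i = j then t - \<mu> i else 0)"
    using assms(1) unfolding V_def
    by (simp add: vec_eq_iff matrix_of_columns_conj_entry matrix_vector_mult_diff_rdistrib eigen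
        matrix_vector_mult_mat inner_diff_right orthonormal_def)
  also have "det \<dots> = (\<Prod>i\<in>UNIV. t - \<mu> i)"
    by (simp add: det_diagonal)
  finally show "poly (charpoly M) t = poly (\<Prod>i\<in>UNIV. [:- \<mu> i, 1:]) t"
    by (simp add: poly_prod)
qed

lemma order_prod_linear_factors:
  fixes \<mu> :: "'i \<Rightarrow> real"
  assumes "finite I"
  shows "order a (\<Prod>i\<in>I. [:- \<mu> i, 1:]) = card {i\<in>I. \<mu> i = a}"
  using assms
proof (induction I rule: finite_induct)
  case empty
  then show ?case
    using order_0I[of 1 a] by simp
next
  case (insert j I)
  have "(\<Prod>i\<in>I. [:- \<mu> i, 1:]) \<noteq> 0"
    using insert.hyps(1) by simp
  then have nonzero: "[:- \<mu> j, 1:] * (\<Prod>i\<in>I. [:- \<mu> i, 1:]) \<noteq> 0"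
    by (metis mult_eq_0_iff pCons_eq_0_iff one_neq_zero)
  have "order a (\<Prod>i\<in>insert j I. [:- \<mu> i, 1:]) = order a [:- \<mu> j, 1:] + card {i\<in>I. \<mu> i = a}"
    by (simp only: prod.insert[OF insert.hyps] order_mult[OF nonzero] insert.IH)
  also have "order a [:- \<mu> j, 1:] = (if \<mu> j = a then 1 else 0)"
    using order_power_n_n[of a 1] by (auto intro: order_0I)
  also have "(if \<mu> j = a then 1 else 0) + card {i\<in>I. \<mu> i = a} = card {i\<in>insert j I. \<mu> i = a}"
  proof -
    have "{i\<in>insert j I. \<mu> i = a} = (if \<mu> j = a then insert j {i\<in>I. \<mu> i = a} else {i\<in>I. \<mu> i = a})"
      by auto
    then show ?thesis
      using insert.hyps by simp
  qed
  finally show ?case .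
qed

lemma eig_count_below_orthonormal_eigenbasis:
  fixes M :: "real^'n^'n" and b :: "'n \<Rightarrow> real^'n"
  assumes "orthonormal b" and "\<And>i. M *v b i = \<mu> i *\<^sub>R b i"
  shows "eig_count_below M t = card {i. \<mu> i < t}"
proof -
  note charpoly = charpoly_orthonormal_eigenbasis[OF assms]
  have roots: "{a. poly (charpoly M) a = 0 \<and> a < t} = \<mu> ` {i. \<mu> i < t}"
    by (auto simp: charpoly poly_prod)
  have "eig_count_below M t = (\<Sum>a\<in>\<mu> ` {i. \<mu> i < t}. card {i. \<mu> i = a})"
    unfolding eig_count_below_def roots by (simp add: charpoly order_prod_linear_factors)
  also have "\<dots> = (\<Sum>a\<in>\<mu> ` {i. \<mu> i < t}. card {i\<in>{i. \<mu> i < t}. \<mu> i = a})"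
    by (intro sum.cong refl arg_cong[where f = card]) auto
  also have "\<dots> = card {i. \<mu> i < t}"
    using sum.image_gen[of "{i. \<mu> i < t}" "\<lambda>_. 1::nat" \<mu>] by simp
  finally show ?thesis .
qed

section \<open>Counting eigenvalues with quadratic forms\<close>

lemma orthonormal_inj:
  fixes b :: "'i \<Rightarrow> 'a::real_inner"
  assumes "orthonormal b"
  shows "inj b"
proof (rule injI)
  fix i j assume "b i = b j"
  then show "i = j"
    using assms by (metis orthonormal_def zero_neq_one)
qed

lemma inner_sum_orthonormal:
  fixes b :: "'i \<Rightarrow> 'a::real_inner"
  assumes "orthonormal b" and "finite I"
  shows "(\<Sum>i\<in>I. c i *\<^sub>R b i) \<bullet> (\<Sum>i\<in>I. d i *\<^sub>R b i) = (\<Sum>i\<in>I. c i * d i)"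
  using assms by (simp add: orthonormal_def inner_sum_left inner_sum_right if_distrib[of "\<lambda>a. _ * a"]
      mult.commute cong: if_cong)

lemma span_orthonormal_image_eq_sums:
  fixes b :: "'i::finite \<Rightarrow> 'a::real_inner"
  assumes "orthonormal b" and "x \<in> span (b ` I)"
  obtains c where "x = (\<Sum>i\<in>I. c i *\<^sub>R b i)"
proof -
  obtain u where "x = (\<Sum>v\<in>b ` I. u v *\<^sub>R v)"
    using assms(2) span_finite[of "b ` I"] by auto
  also have "\<dots> = (\<Sum>i\<in>I. u (b i) *\<^sub>R b i)"
    using orthonormal_inj[OF assms(1)] by (simp add: sum.reindex inj_on_def inj_def)
  finally show ?thesis
    by (rule that)
qed

lemma dim_span_orthonormal_image:
  fixes b :: "'i \<Rightarrow> 'a::euclidean_space"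
  assumes "orthonormal b"
  shows "dim (span (b ` I)) = card I"
proof -
  have "pairwise orthogonal (b ` I)" "0 \<notin> b ` I"
    using assms by (auto simp: pairwise_def orthogonal_def orthonormal_def) (metis inner_zero_left zero_neq_one)
  then have "independent (b ` I)"
    by (rule pairwise_orthogonal_independent)
  then have "dim (span (b ` I)) = card (b ` I)"
    by (simp add: dim_eq_card_independent)
  also have "\<dots> = card I"
    using orthonormal_inj[OF assms] by (simp add: card_image inj_on_def inj_def)
  finally show ?thesis .
qed

lemma quadratic_form_on_eigenvector_span:
  fixes M :: "real^'n^'n" and b :: "'n \<Rightarrow> real^'n"
  assumes "orthonormal b" and eigen: "\<And>i. M *v b i = \<mu> i *\<^sub>R b i" and "x \<in> span (b ` I)"
  obtains c where "x \<bullet> (M *v x) = (\<Sum>i\<in>I. (c i)\<^sup>2 * \<mu> i)" and "x \<bullet> x = (\<Sum>i\<in>I. (c i)\<^sup>2)"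
proof -
  obtain c where x: "x = (\<Sum>i\<in>I. c i *\<^sub>R b i)"
    using span_orthonormal_image_eq_sums[OF assms(1,3)] .
  have "M *v x = (\<Sum>i\<in>I. (c i * \<mu> i) *\<^sub>R b i)"
    unfolding x by (simp add: linear_sum[OF matrix_vector_mul_linear] matrix_vector_mult_scaleR eigen)
  then show ?thesis
    using that[of c] inner_sum_orthonormal[OF assms(1)] x
    by (simp add: power2_eq_square mult.assoc)
qed

lemma quadratic_form_le_on_eigenvector_span:
  fixes M :: "real^'n^'n" and b :: "'n \<Rightarrow> real^'n"
  assumes "orthonormal b" and "\<And>i. M *v b i = \<mu> i *\<^sub>R b i" and "x \<in> span (b ` I)"
    and "\<And>i. i \<in> I \<Longrightarrow> \<mu> i \<le> t"
  shows "x \<bullet> (M *v x) \<le> t * (x \<bullet> x)"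
proof -
  obtain c where "x \<bullet> (M *v x) = (\<Sum>i\<in>I. (c i)\<^sup>2 * \<mu> i)" and "x \<bullet> x = (\<Sum>i\<in>I. (c i)\<^sup>2)"
    using quadratic_form_on_eigenvector_span[OF assms(1-3)] .
  moreover have "(\<Sum>i\<in>I. (c i)\<^sup>2 * \<mu> i) \<le> (\<Sum>i\<in>I. (c i)\<^sup>2 * t)"
    using assms(4) by (intro sum_mono mult_left_mono) auto
  ultimately show ?thesis
    by (simp add: sum_distrib_left mult.commute)
qed

lemma quadratic_form_ge_on_eigenvector_span:
  fixes M :: "real^'n^'n" and b :: "'n \<Rightarrow> real^'n"
  assumes "orthonormal b" and "\<And>i. M *v b i = \<mu> i *\<^sub>R b i" and "x \<in> span (b ` I)"
    and "\<And>i. i \<in> I \<Longrightarrow> t \<le> \<mu> i"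
  shows "t * (x \<bullet> x) \<le> x \<bullet> (M *v x)"
proof -
  obtain c where "x \<bullet> (M *v x) = (\<Sum>i\<in>I. (c i)\<^sup>2 * \<mu> i)" and "x \<bullet> x = (\<Sum>i\<in>I. (c i)\<^sup>2)"
    using quadratic_form_on_eigenvector_span[OF assms(1-3)] .
  moreover have "(\<Sum>i\<in>I. (c i)\<^sup>2 * t) \<le> (\<Sum>i\<in>I. (c i)\<^sup>2 * \<mu> i)"
    using assms(4) by (intro sum_mono mult_left_mono) auto
  ultimately show ?thesis
    by (simp add: sum_distrib_left mult.commute)
qed

lemma dim_add_le_if_Int_zero:
  fixes U W :: "'a::euclidean_space set"
  assumes "subspace U" and "subspace W" and "U \<inter> W \<subseteq> {0}"
  shows "dim U + dim W \<le> DIM('a)"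
proof -
  have "U \<inter> W = {0}"
    using assms subspace_0 by blast
  then have "dim U + dim W = dim {x + y |x y. x \<in> U \<and> y \<in> W}"
    using dim_sums_Int[OF assms(1,2)] by simp
  also have "\<dots> \<le> DIM('a)"
    by (rule dim_subset_UNIV)
  finally show ?thesis .
qed

lemma dim_le_card_eigenvalues_below:
  fixes M :: "real^'n^'n" and b :: "'n \<Rightarrow> real^'n"
  assumes "orthonormal b" and eigen: "\<And>i. M *v b i = \<mu> i *\<^sub>R b i" and "subspace K"
    and below: "\<And>x. x \<in> K \<Longrightarrow> x \<noteq> 0 \<Longrightarrow> x \<bullet> (M *v x) < t * (x \<bullet> x)"
  shows "dim K \<le> card {i. \<mu> i < t}"
proof -
  let ?W = "span (b ` {i. \<not> \<mu> i < t})"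
  have "x = 0" if "x \<in> K" and "x \<in> ?W" for x
  proof (rule ccontr)
    assume "x \<noteq> 0"
    have "t * (x \<bullet> x) \<le> x \<bullet> (M *v x)"
      using quadratic_form_ge_on_eigenvector_span[OF assms(1,2) \<open>x \<in> ?W\<close>] by simp
    with below[OF \<open>x \<in> K\<close> \<open>x \<noteq> 0\<close>] show False
      by simp
  qed
  then have "dim K + card {i. \<not> \<mu> i < t} \<le> CARD('n)"
    using dim_add_le_if_Int_zero[OF \<open>subspace K\<close>, of ?W] dim_span_orthonormal_image[OF assms(1)]
    by auto
  moreover have "{i. \<not> \<mu> i < t} = UNIV - {i. \<mu> i < t}"
    by auto
  ultimately show ?thesis
    by (simp add: card_Diff_subset)
qed

lemma dim_add_card_eigenvalues_below_le:
  fixes M :: "real^'n^'n" and b :: "'n \<Rightarrow> real^'n"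
  assumes "orthonormal b" and eigen: "\<And>i. M *v b i = \<mu> i *\<^sub>R b i" and "subspace K"
    and above: "\<And>x. x \<in> K \<Longrightarrow> x \<noteq> 0 \<Longrightarrow> t * (x \<bullet> x) < x \<bullet> (M *v x)"
  shows "dim K + card {i. \<mu> i < t} \<le> CARD('n)"
proof -
  let ?U = "span (b ` {i. \<mu> i < t})"
  have "x = 0" if "x \<in> K" and "x \<in> ?U" for x
  proof (rule ccontr)
    assume "x \<noteq> 0"
    have "x \<bullet> (M *v x) \<le> t * (x \<bullet> x)"
      using quadratic_form_le_on_eigenvector_span[OF assms(1,2) \<open>x \<in> ?U\<close>] by simp
    with above[OF \<open>x \<in> K\<close> \<open>x \<noteq> 0\<close>] show False
      by simp
  qed
  then show ?thesis
    using dim_add_le_if_Int_zero[OF \<open>subspace K\<close>, of ?U] dim_span_orthonormal_image[OF assms(1)]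
    by auto
qed

lemma abs_quadratic_form_le_norm2:
  fixes N :: "real^'n^'n"
  shows "\<bar>x \<bullet> (N *v x)\<bar> \<le> norm2 N * (x \<bullet> x)"
proof -
  have "\<bar>x \<bullet> (N *v x)\<bar> \<le> norm x * norm (N *v x)"
    by (rule Cauchy_Schwarz_ineq2)
  also have "\<dots> \<le> norm x * (norm2 N * norm x)"
    unfolding norm2_def by (intro mult_left_mono onorm matrix_vector_mul_bounded_linear) simp
  also have "\<dots> = norm2 N * (x \<bullet> x)"
    by (simp add: power2_norm_eq_inner[symmetric] power2_eq_square)
  finally show ?thesis .
qed

lemma dim_add_dim_orthogonal_comp:
  fixes K :: "'a::euclidean_space set"
  assumes "subspace K"
  shows "dim K + dim (K\<^sup>\<bottom>) = DIM('a)"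
  using dim_subspace_orthogonal_to_vectors[OF assms subspace_UNIV]
  by (simp add: orthogonal_comp_def)

lemma eig_count_below_perturbed_projection:
  fixes L N :: "real^'n^'n"
  assumes "transpose L = L" and "transpose N = N" and "norm2 N < 1/2" and "subspace K"
    and kernel: "\<And>x. x \<in> K \<Longrightarrow> L *v x = 0"
    and identity: "\<And>x. x \<in> K\<^sup>\<bottom> \<Longrightarrow> L *v x = x"
  shows "eig_count_below (L + N) (1/2) = dim K"
proof -
  have "transpose (L + N) = L + N"
    using assms(1,2) by (simp add: vec_eq_iff transpose_def)
  then obtain b :: "'n \<Rightarrow> real^'n" and \<mu> where b: "orthonormal b" and eigen: "\<And>i. (L + N) *v b i = \<mu> i *\<^sub>R b i"
    using symmetric_matrix_orthonormal_eigenbasis by blast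
  have quadratic_form: "x \<bullet> ((L + N) *v x) = x \<bullet> (L *v x) + x \<bullet> (N *v x)" for x
    by (simp add: matrix_vector_mult_add_rdistrib inner_add_right)
  have perturbation: "\<bar>x \<bullet> (N *v x)\<bar> < 1/2 * (x \<bullet> x)" if "x \<noteq> 0" for x
  proof -
    have "norm2 N * (x \<bullet> x) < 1/2 * (x \<bullet> x)"
      using assms(3) by (rule mult_strict_right_mono) (simp add: that)
    then show ?thesis
      using abs_quadratic_form_le_norm2[of x N] by linarith
  qed
  have "dim K \<le> card {i. \<mu> i < 1/2}"
  proof (rule dim_le_card_eigenvalues_below[OF b eigen \<open>subspace K\<close>])
    show "x \<bullet> ((L + N) *v x) < 1/2 * (x \<bullet> x)" if "x \<in> K" "x \<noteq> 0" for x
      using perturbation[OF \<open>x \<noteq> 0\<close>] by (simp add: quadratic_form kernel[OF \<open>x \<in> K\<close>])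
  qed
  moreover have "dim (K\<^sup>\<bottom>) + card {i. \<mu> i < 1/2} \<le> CARD('n)"
  proof (rule dim_add_card_eigenvalues_below_le[OF b eigen subspace_orthogonal_comp])
    show "1/2 * (x \<bullet> x) < x \<bullet> ((L + N) *v x)" if "x \<in> K\<^sup>\<bottom>" "x \<noteq> 0" for x
      using perturbation[OF \<open>x \<noteq> 0\<close>] by (simp add: quadratic_form identity[OF \<open>x \<in> K\<^sup>\<bottom>\<close>])
  qed
  moreover have "dim K + dim (K\<^sup>\<bottom>) = CARD('n)"
    using dim_add_dim_orthogonal_comp[OF \<open>subspace K\<close>] by simp
  ultimately show ?thesis
    using eig_count_below_orthonormal_eigenbasis[OF b eigen, where t = "1/2"] by linarith
qed

section \<open>The normalized Laplacian of a cluster graph\<close>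

lemma diagonal_conj_entry:
  "((\<chi> i j. if i = j then f i else 0) ** B ** (\<chi> i j. if i = j then f i else 0)) $ i $ j
    = f i * B $ i $ j * f j"
proof -
  have "((\<chi> i j. if i = j then f i else 0) ** B) $ i $ j = f i * B $ i $ j" for i j
    by (simp add: matrix_matrix_mult_def if_distrib[of "\<lambda>a. a * _"] cong: if_cong)
  then show ?thesis
    by (simp add: matrix_matrix_mult_def if_distrib[of "\<lambda>a. _ * a"] cong: if_cong)
qed

definition indicator_vec :: "'n set \<Rightarrow> real^'n" where
  "indicator_vec X = (\<chi> j. indicator X j)"

lemma inner_indicator_vec: "indicator_vec X \<bullet> x = (\<Sum>j\<in>X. x $ j)"
  by (simp add: indicator_vec_def inner_vec_def indicator_def if_distrib[of "\<lambda>a. a * _"]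
      sum.inter_filter[symmetric] cong: if_cong)

lemma inj_indicator_vec: "inj indicator_vec"
proof (rule injI)
  fix X Y :: "'n::finite set"
  assume "indicator_vec X = indicator_vec Y"
  then have "indicator X j = (indicator Y j :: real)" for j
    by (metis indicator_vec_def vec_lambda_beta)
  then show "X = Y"
    by (metis indicator_eq_1_iff subsetI subset_antisym)
qed

locale cluster_partition =
  fixes E :: "'n::finite \<Rightarrow> 'n \<Rightarrow> bool" and R :: "('n \<times> 'n) set"
  assumes equiv_R: "equiv UNIV R"
    and adjacent_iff: "\<And>x y. E x y \<longleftrightarrow> x \<noteq> y \<and> (x, y) \<in> R"
begin

definition cluster_size :: "'n \<Rightarrow> nat" where
  "cluster_size i = card (R `` {i})"

lemma in_own_cluster: "i \<in> R `` {i}"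
  using equiv_class_self[OF equiv_R] by simp

lemma cluster_size_pos: "cluster_size i > 0"
  unfolding cluster_size_def using in_own_cluster[of i] by (auto simp: card_gt_0_iff)

lemma same_cluster_iff: "(i, j) \<in> R \<longleftrightarrow> R `` {i} = R `` {j}"
  using equiv_class_eq_iff[OF equiv_R] by simp

lemma degree_eq_cluster_size: "real (degree E i) + 1 = real (cluster_size i)"
proof -
  have "{j. E i j} = R `` {i} - {i}"
    using adjacent_iff by auto
  then show ?thesis
    using in_own_cluster[of i] cluster_size_pos[of i]
    by (simp add: degree_def cluster_size_def card_Diff_singleton)
qed

lemma norm_laplacian_entry:
  "norm_laplacian E $ i $ j = (if i = j then 1 else 0) - (if (i, j) \<in> R then 1 / real (cluster_size i) else 0)"
proof -
  have "C_inv_sqrt E = (\<chi> i j. if i = j then 1 / sqrt (real (cluster_size i)) else 0)"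
    unfolding C_inv_sqrt_def degree_eq_cluster_size ..
  then have entry: "norm_laplacian E $ i $ j
      = 1 / sqrt (real (cluster_size i)) * (deg_mat E - adj_mat E) $ i $ j * (1 / sqrt (real (cluster_size j)))"
    unfolding norm_laplacian_def by (simp only: diagonal_conj_entry)
  consider "i = j" | "i \<noteq> j" "(i, j) \<in> R" | "(i, j) \<notin> R"
    by blast
  then show ?thesis
  proof cases
    case 1
    have "real (degree E i) = real (cluster_size i) - 1"
      using degree_eq_cluster_size[of i] by simp
    then show ?thesis
      unfolding entry using 1 in_own_cluster[of i] adjacent_iff[of i i] cluster_size_pos[of i]
      by (simp add: deg_mat_def adj_mat_def field_simps)
  next
    case 2
    then have "cluster_size j = cluster_size i"
      by (simp add: cluster_size_def same_cluster_iff)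
    with 2 show ?thesis
      using adjacent_iff[of i j] cluster_size_pos[of i] by (simp add: entry deg_mat_def adj_mat_def)
  next
    case 3
    then show ?thesis
      using adjacent_iff[of i j] in_own_cluster[of i] by (auto simp: entry deg_mat_def adj_mat_def)
  qed
qed

lemma transpose_norm_laplacian: "transpose (norm_laplacian E) = norm_laplacian E"
proof -
  have "(j, i) \<in> R \<longleftrightarrow> (i, j) \<in> R" for i j
    using same_cluster_iff by metis
  moreover have "(i, j) \<in> R \<Longrightarrow> cluster_size i = cluster_size j" for i j
    by (simp add: cluster_size_def same_cluster_iff)
  ultimately show ?thesis
    by (auto simp: vec_eq_iff transpose_def norm_laplacian_entry)
qed

lemma norm_laplacian_mult:
  "(norm_laplacian E *v x) $ i = x $ i - (\<Sum>j\<in>R `` {i}. x $ j) / real (cluster_size i)"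
proof -
  have "(\<Sum>j\<in>UNIV. (if (i, j) \<in> R then 1 / real (cluster_size i) else 0) * x $ j)
      = (\<Sum>j\<in>R `` {i}. x $ j) / real (cluster_size i)"
    by (simp add: if_distrib[of "\<lambda>a. a * _"] sum.inter_filter[symmetric] sum_divide_distrib
        Image_singleton cong: if_cong)
  then show ?thesis
    by (simp add: matrix_vector_mult_def norm_laplacian_entry left_diff_distrib sum_subtractf
        if_distrib[of "\<lambda>a. a * _"] cong: if_cong)
qed

definition cluster_space :: "(real^'n) set" where
  "cluster_space = span (indicator_vec ` (UNIV // R))"

lemma subspace_cluster_space: "subspace cluster_space"
  by (simp add: cluster_space_def)

lemma norm_laplacian_indicator_vec:
  assumes "X \<in> UNIV // R"
  shows "norm_laplacian E *v indicator_vec X = 0"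
proof -
  have "(\<Sum>j\<in>R `` {i}. indicator_vec X $ j) = (if i \<in> X then real (cluster_size i) else 0)" for i
  proof (cases "i \<in> X")
    case True
    then have "R `` {i} = X"
      using assms equiv_R by (metis Image_singleton_iff equiv_class_eq_iff quotientE)
    then show ?thesis
      using True by (simp add: indicator_vec_def cluster_size_def)
  next
    case False
    then have "R `` {i} \<inter> X = {}"
      using quotient_disj[OF equiv_R quotientI[of i] assms] in_own_cluster[of i] by blast
    then have "\<forall>j\<in>R `` {i}. indicator_vec X $ j = 0"
      by (auto simp: indicator_vec_def disjoint_iff)
    then show ?thesis
      using False by (simp add: sum.neutral)
  qed
  then have "(norm_laplacian E *v indicator_vec X) $ i = 0" for i
    using cluster_size_pos[of i] by (simp add: norm_laplacian_mult indicator_vec_def)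
  then show ?thesis
    by (simp add: vec_eq_iff)
qed

lemma norm_laplacian_cluster_space:
  assumes "x \<in> cluster_space"
  shows "norm_laplacian E *v x = 0"
proof -
  have "subspace {x. norm_laplacian E *v x = 0}"
    using linear_subspace_kernel[OF matrix_vector_mul_linear[of "norm_laplacian E"]] by simp
  with assms show ?thesis
    unfolding cluster_space_def using span_induct norm_laplacian_indicator_vec by blast
qed

lemma norm_laplacian_orthogonal_comp_cluster_space:
  assumes "x \<in> cluster_space\<^sup>\<bottom>"
  shows "norm_laplacian E *v x = x"
proof -
  have "indicator_vec (R `` {i}) \<in> cluster_space" for i
    unfolding cluster_space_def by (intro span_base imageI quotientI) simp
  then have "indicator_vec (R `` {i}) \<bullet> x = 0" for i
    using assms by (auto simp: orthogonal_comp_def orthogonal_def)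
  then have "(\<Sum>j\<in>R `` {i}. x $ j) = 0" for i
    by (simp add: inner_indicator_vec)
  then show ?thesis
    by (simp add: vec_eq_iff norm_laplacian_mult)
qed

lemma dim_cluster_space: "dim cluster_space = card (UNIV // R)"
proof -
  have nonempty: "X \<noteq> {}" if "X \<in> UNIV // R" for X
    using that in_own_cluster by (auto elim: quotientE)
  have "inj_on indicator_vec (UNIV // R)"
    by (rule inj_on_subset[OF inj_indicator_vec]) simp
  moreover have "pairwise orthogonal (indicator_vec ` (UNIV // R))"
  proof (rule pairwiseI, clarify)
    fix X Y assume "X \<in> UNIV // R" "Y \<in> UNIV // R" "indicator_vec X \<noteq> indicator_vec Y"
    then have "X \<inter> Y = {}"
      using quotient_disj[OF equiv_R] by blast
    then show "orthogonal (indicator_vec X) (indicator_vec Y)"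
      unfolding orthogonal_def inner_indicator_vec
      by (intro sum.neutral) (auto simp: indicator_vec_def disjoint_iff)
  qed
  moreover have "0 \<notin> indicator_vec ` (UNIV // R)"
  proof
    assume "0 \<in> indicator_vec ` (UNIV // R)"
    then obtain X where "X \<in> UNIV // R" and "indicator_vec X = 0"
      by auto
    moreover obtain j where "j \<in> X"
      using nonempty[OF \<open>X \<in> UNIV // R\<close>] by blast
    ultimately show False
      by (metis indicator_simps(1) indicator_vec_def vec_lambda_beta zero_index zero_neq_one)
  qed
  ultimately show ?thesis
    unfolding cluster_space_def
    by (simp add: pairwise_orthogonal_independent dim_eq_card_independent card_image)
qed

end

theorem lemma2:
  fixes E :: "'n::finite \<Rightarrow> 'n \<Rightarrow> bool" and m :: nat and N :: "real^'n^'n"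
  assumes "cluster_graph E m"
    and "transpose N = N"
    and "norm2 N < 1/2"
  shows "eig_count_below (norm_laplacian E + N) (1/2) = m"
proof -
  obtain R where "equiv UNIV R" and "\<forall>x y. E x y \<longleftrightarrow> x \<noteq> y \<and> (x, y) \<in> R"
    and "card (UNIV // R) = m"
    using assms(1) unfolding cluster_graph_def by blast
  then interpret cluster_partition E R
    by unfold_locales blast+
  have "eig_count_below (norm_laplacian E + N) (1/2) = dim cluster_space"
    by (rule eig_count_below_perturbed_projection[OF transpose_norm_laplacian assms(2,3)
          subspace_cluster_space norm_laplacian_cluster_space
          norm_laplacian_orthogonal_comp_cluster_space])
  also have "\<dots> = m"
    using dim_cluster_space \<open>card (UNIV // R) = m\<close> by simp
  finally show ?thesis .
qed

end
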